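(* Let $n\ge 4$ be an integer. If $k$ is a positive integer satisfying $$\binom{(k-1)-\lfloor \frac{(n-1)^3}{2}\rfloor-1}{\lfloor\frac{(n-1)^3-1}{2}\rfloor}+\binom{(k-1)-\lfloor \frac{(n-1)^3-1}{2}\rfloor-1}{\lfloor\frac{(n-1)^3}{2}\rfloor}<n^3\le \binom{k-\lfloor \frac{(n-1)^3}{2}\rfloor-1}{\lfloor\frac{(n-1)^3-1}{2}\rfloor}+\binom{k-\lfloor \frac{(n-1)^3-1}{2}\rfloor-1}{\lfloor\frac{(n-1)^3}{2}\rfloor},$$ then $k=(n-1)^3+2$.
   Context: For integers $a$ and $b\ge 0$, $\binom{a}{b}$ denotes the usual binomial coefficient, taken to be $0$ when $a<b$. *)

theory Defs
  imports Main
begin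

definition ibinom :: "int \<Rightarrow> nat \<Rightarrow> nat" where
  "ibinom a b = (if a < int b then 0 else (nat a) choose b)"

end

theory Submission
  imports Defs
begin

text \<open>The left-hand sums in the hypotheses are values of the nondecreasing function
  \<open>x \<mapsto> C(x - a - 1, b) + C(x - b - 1, a)\<close> with \<open>a + b + 1 = m = (n - 1)^3\<close>, at \<open>k - 1\<close>
  and \<open>k\<close>. So \<open>k\<close> is the unique point where this function first reaches \<open>n^3\<close>.
  At \<open>m + 1\<close> both coefficients are \<open>C(c + 1, c)\<close> and sum to \<open>m + 1 < n^3\<close>; at \<open>m + 2\<close> both
  are \<open>C(c + 2, c)\<close>, whose sum is at least \<open>m^2/4 = (n - 1)^6/4 \<ge> n^3\<close>.\<close>

lemma mono_threshold_unique:
  fixes f :: "int \<Rightarrow> 'a :: linorder"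
  assumes "mono f"
    and "f (c - 1) < N" "N \<le> f c"
    and "f (k - 1) < N" "N \<le> f k"
  shows "k = c"
proof (rule ccontr)
  assume "k \<noteq> c"
  then consider "k \<le> c - 1" | "c \<le> k - 1" by linarith
  then show False
  proof cases
    case 1
    then have "f k \<le> f (c - 1)" by (rule monoD[OF \<open>mono f\<close>])
    with assms show False by simp
  next
    case 2
    then have "f c \<le> f (k - 1)" by (rule monoD[OF \<open>mono f\<close>])
    with assms show False by simp
  qed
qed

lemma ibinom_mono: "x \<le> y \<Longrightarrow> ibinom x c \<le> ibinom y c"
  unfolding ibinom_def by (auto intro: binomial_right_mono)

lemma ibinom_plus_one_self: "ibinom (int c + 1) c = c + 1"
proof -
  have "nat (int c + 1) = Suc c" by simp
  then show ?thesis by (simp add: ibinom_def)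
qed

lemma ibinom_plus_two_self: "ibinom (int c + 2) c = (c + 2) * (c + 1) div 2"
proof -
  have "nat (int c + 2) = c + 2" by simp
  moreover have "(c + 2) choose c = (c + 2) choose 2"
    using binomial_symmetric[of c "c + 2"] by simp
  ultimately show ?thesis by (simp add: ibinom_def choose_two)
qed

definition split_binom_sum :: "nat \<Rightarrow> int \<Rightarrow> nat" where
  "split_binom_sum m x =
     ibinom (x - int (m div 2) - 1) ((m - 1) div 2) + ibinom (x - int ((m - 1) div 2) - 1) (m div 2)"

lemma mono_split_binom_sum: "mono (split_binom_sum m)"
  unfolding split_binom_sum_def by (intro monoI add_mono ibinom_mono) auto

lemma split_binom_sum_succ:
  assumes "m \<ge> 1"
  shows "split_binom_sum m (int m + 1) = m + 1"
proof -
  define a where "a = m div 2"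
  define b where "b = (m - 1) div 2"
  have "int m + 1 - int a - 1 = int b + 1" "int m + 1 - int b - 1 = int a + 1"
    using assms unfolding a_def b_def by linarith+
  then have "split_binom_sum m (int m + 1) = (b + 1) + (a + 1)"
    by (simp only: split_binom_sum_def ibinom_plus_one_self flip: a_def b_def)
  then show ?thesis
    using assms unfolding a_def b_def by linarith
qed

lemma split_binom_sum_succ_succ:
  assumes "m \<ge> 1"
  shows "m\<^sup>2 \<le> 4 * split_binom_sum m (int m + 2)"
proof -
  define a where "a = m div 2"
  define b where "b = (m - 1) div 2"
  have "int m + 2 - int a - 1 = int b + 2" "int m + 2 - int b - 1 = int a + 2"
    using assms unfolding a_def b_def by linarith+
  then have sum: "split_binom_sum m (int m + 2) = (b + 2) * (b + 1) div 2 + (a + 2) * (a + 1) div 2"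
    by (simp only: split_binom_sum_def ibinom_plus_two_self flip: a_def b_def)
  have "(b + 2) * (b + 1) \<le> (a + 2) * (a + 1)"
    unfolding a_def b_def by (intro mult_mono) (auto intro: div_le_mono)
  then have "(b + 2) * (b + 1) div 2 \<le> (a + 2) * (a + 1) div 2"
    by (rule div_le_mono)
  moreover have "(b + 2) * (b + 1) = 2 * ((b + 2) * (b + 1) div 2)"
    \<comment> \<open>a product of consecutive numbers is even\<close>
    by simp
  ultimately have half: "(b + 2) * (b + 1) \<le> split_binom_sum m (int m + 2)"
    unfolding sum by linarith
  have "m\<^sup>2 \<le> (2 * (b + 2)) * (2 * (b + 1))"
    unfolding b_def power2_eq_square using assms by (intro mult_mono) auto
  also have "\<dots> = 4 * ((b + 2) * (b + 1))"
    by simp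
  also have "\<dots> \<le> 4 * split_binom_sum m (int m + 2)"
    using half by simp
  finally show ?thesis .
qed

lemma cube_pred_succ_less_cube: "n \<ge> 2 \<Longrightarrow> (n - 1) ^ 3 + 1 < (n :: nat) ^ 3"
  by (cases n) (auto simp: power3_eq_cube algebra_simps)

lemma four_cube_le_pred_sixth_power:
  assumes "n \<ge> (4 :: nat)"
  shows "4 * n ^ 3 \<le> ((n - 1) ^ 3)\<^sup>2"
proof -
  have "3 * (n - 1) \<le> (n - 1) * (n - 1)"
    using assms by (intro mult_right_mono) auto
  then have "2 * n \<le> (n - 1) * (n - 1)"
    using assms by linarith
  then have "(2 * n) ^ 3 \<le> ((n - 1) * (n - 1)) ^ 3"
    by (rule power_mono) simp
  then show ?thesis
    by (simp add: power_mult_distrib power2_eq_square)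
qed

theorem proposition6:
  fixes n k :: nat
  assumes "n \<ge> 4" and "k > 0"
    and "ibinom ((int k - 1) - (int ((n-1)^3) div 2) - 1) (nat ((int ((n-1)^3) - 1) div 2))
         + ibinom ((int k - 1) - ((int ((n-1)^3) - 1) div 2) - 1) (nat (int ((n-1)^3) div 2))
         < n^3"
    and "n^3 \<le> ibinom (int k - (int ((n-1)^3) div 2) - 1) (nat ((int ((n-1)^3) - 1) div 2))
         + ibinom (int k - ((int ((n-1)^3) - 1) div 2) - 1) (nat (int ((n-1)^3) div 2))"
  shows "k = (n-1)^3 + 2"
proof -
  define m where "m = (n - 1) ^ 3"
  have "m \<ge> 1" using assms(1) by (simp add: m_def)
  then have "int ((n - 1) ^ 3) div 2 = int (m div 2)"
    and "(int ((n - 1) ^ 3) - 1) div 2 = int ((m - 1) div 2)"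
    by (simp_all add: m_def zdiv_int of_nat_diff)
  then have below: "split_binom_sum m (int k - 1) < n ^ 3"
    and above: "n ^ 3 \<le> split_binom_sum m (int k)"
    using assms(3,4) unfolding split_binom_sum_def by (simp_all only: nat_int)
  have "m + 1 < n ^ 3"
    using cube_pred_succ_less_cube[of n] assms(1) by (simp add: m_def)
  then have "split_binom_sum m (int m + 2 - 1) < n ^ 3"
    using split_binom_sum_succ[OF \<open>m \<ge> 1\<close>] by (simp add: add.commute)
  moreover have "n ^ 3 \<le> split_binom_sum m (int m + 2)"
    using split_binom_sum_succ_succ[OF \<open>m \<ge> 1\<close>] four_cube_le_pred_sixth_power[OF assms(1)]
    by (simp add: m_def)
  ultimately have "int k = int m + 2"
    using mono_threshold_unique[OF mono_split_binom_sum] below above by blast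
  then have "k = m + 2" by linarith
  then show ?thesis unfolding m_def .
qed

end
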